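(* Let $n \geq 1$ and $m \geq 1$ be integers, and let $p:\mathbb{C} \rightarrow \mathbb{C}$ be a polynomial of degree $n+m$ whose roots (listed with multiplicity) are $a_1, \dots, a_{n+m}$, where $|a_i| \leq 1$ for $1 \leq i \leq n$ (these $n$ roots lie inside the unit disk) and the remaining $m$ roots $a_{n+1}, \dots, a_{n+m}$ lie outside the unit disk. Suppose there is a real number $d$ with $$ \min_{n+1 \leq i \leq n+m}{ |a_i|} \geq d > 1 + \frac{2 m}{n}.$$ Then $p'$ has $n-1$ roots (counted with multiplicity) inside the unit disk and its remaining $m$ roots have modulus at least $\frac{dn - m}{n+m}$, a quantity which is $> 1$.
   Context: Roots of $p$ and of $p'$ are counted with multiplicity; "inside the unit disk" means in the closed disk $\{z : |z| \leq 1\}$. *)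

theory Defs
  imports Complex_Main "HOL-Computational_Algebra.Computational_Algebra"
begin

end

theory Submission
  imports Defs "HOL-Complex_Analysis.Complex_Analysis"
begin

(* For 1 < |z| < d the logarithmic derivative gives z p'(z) / p(z) = (SUM a. z / (z - a))
   over the roots a of p.  A root in the closed unit disk contributes a term of real part at
   least r / (r + 1), a root of modulus at least d one of modulus at most r / (d - r), where
   r = |z|.  Hence Re (z p'(z) / p(z)) > 0 as long as r < (d n - m) / (n + m), so p' has no
   zeros in that annulus.  On a circle inside the annulus, positivity of the real part also
   makes z p'(z) and a large real multiple of p(z) satisfy the hypothesis of Rouche's theorem,
   so z p' has n zeros inside the circle, one of them at the origin. *)

lemma Re_sum_mset_ge:
  fixes f :: "'a \<Rightarrow> complex"
  assumes "\<And>a. a \<in># A \<Longrightarrow> c \<le> Re (f a)"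
  shows "real (size A) * c \<le> Re (\<Sum>a\<in>#A. f a)"
  using assms by (induction A) (auto simp: algebra_simps add_mono)

lemma norm_sum_mset_le:
  fixes f :: "'a \<Rightarrow> 'b::real_normed_vector"
  assumes "\<And>a. a \<in># A \<Longrightarrow> norm (f a) \<le> c"
  shows "norm (\<Sum>a\<in>#A. f a) \<le> real (size A) * c"
  using assms
proof (induction A)
  case (add x A)
  have "norm (\<Sum>a\<in># add_mset x A. f a) \<le> norm (f x) + norm (\<Sum>a\<in>#A. f a)"
    by (simp add: norm_triangle_ineq)
  also have "\<dots> \<le> c + real (size A) * c"
    using add by (intro add_mono) auto
  finally show ?case
    by (simp add: algebra_simps)
qed simp

lemma Re_inverse_one_minus_ge:
  fixes u :: complex
  assumes "cmod u < 1"
  shows "1 / (1 + cmod u) \<le> Re (1 / (1 - u))"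
proof -
  have "u \<noteq> 1"
    using assms by auto
  have sq: "(cmod (1 - u))\<^sup>2 = 1 - 2 * Re u + (cmod u)\<^sup>2"
    unfolding cmod_power2 by (simp add: power2_eq_square algebra_simps)
  have "- cmod u \<le> Re u"
    using abs_Re_le_cmod[of u] by linarith
  then have "0 \<le> (1 - cmod u) * (cmod u + Re u)"
    using assms by (intro mult_nonneg_nonneg) auto
  then have "(cmod (1 - u))\<^sup>2 \<le> (1 - Re u) * (1 + cmod u)"
    unfolding sq by (simp add: algebra_simps power2_eq_square)
  moreover have "0 < (cmod (1 - u))\<^sup>2"
    using \<open>u \<noteq> 1\<close> by simp
  ultimately have "1 / (1 + cmod u) \<le> (1 - Re u) / (cmod (1 - u))\<^sup>2"
    by (simp add: divide_simps add_pos_nonneg mult.commute)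
  also have "\<dots> = Re (1 / (1 - u))"
    by (simp add: Re_divide cmod_power2)
  finally show ?thesis .
qed

lemma Re_div_diff_ge:
  fixes z a :: complex
  assumes "cmod a \<le> s" "s < cmod z"
  shows "cmod z / (cmod z + s) \<le> Re (z / (z - a))"
proof -
  have "0 \<le> s"
    using assms(1) norm_ge_zero order_trans by blast
  with assms(2) have z: "z \<noteq> 0"
    by auto
  have u: "cmod (a / z) \<le> s / cmod z" "s / cmod z < 1"
    using assms z by (auto simp: norm_divide divide_right_mono)
  have "cmod z / (cmod z + s) = 1 / (1 + s / cmod z)"
    using z by (simp add: field_simps)
  also have "\<dots> \<le> 1 / (1 + cmod (a / z))"
    using u \<open>0 \<le> s\<close> by (intro divide_left_mono mult_pos_pos add_pos_nonneg) auto
  also have "\<dots> \<le> Re (1 / (1 - a / z))"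
    using u by (intro Re_inverse_one_minus_ge) auto
  also have "1 / (1 - a / z) = z / (z - a)"
    using z by (simp add: field_simps)
  finally show ?thesis .
qed

lemma norm_div_diff_le_inner:
  fixes z a :: complex
  assumes "cmod a \<le> s" "s < cmod z"
  shows "cmod (z / (z - a)) \<le> cmod z / (cmod z - s)"
proof -
  have "cmod z - s \<le> cmod (z - a)"
    using norm_triangle_ineq2[of z a] assms by simp
  then show ?thesis
    using assms by (simp add: norm_divide frac_le)
qed

lemma norm_div_diff_le_outer:
  fixes z a :: complex
  assumes "cmod z < s" "s \<le> cmod a"
  shows "cmod (z / (z - a)) \<le> cmod z / (s - cmod z)"
proof -
  have "s - cmod z \<le> cmod (z - a)"
    using norm_triangle_ineq2[of a z] assms by (simp add: norm_minus_commute)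
  then show ?thesis
    using assms by (simp add: norm_divide frac_le)
qed

lemma Re_sum_div_diff_ge:
  fixes z :: complex
  assumes "\<forall>a\<in>#A. cmod a \<le> s" "\<forall>b\<in>#B. d \<le> cmod b" "s < cmod z" "cmod z < d"
  shows "real (size A) * (cmod z / (cmod z + s)) - real (size B) * (cmod z / (d - cmod z))
           \<le> Re (\<Sum>a\<in>#A + B. z / (z - a))"
proof -
  have "real (size A) * (cmod z / (cmod z + s)) \<le> Re (\<Sum>a\<in>#A. z / (z - a))"
    using assms by (intro Re_sum_mset_ge Re_div_diff_ge) auto
  moreover have "real (size B) * - (cmod z / (d - cmod z)) \<le> Re (\<Sum>b\<in>#B. z / (z - b))"
  proof (rule Re_sum_mset_ge)
    fix b assume "b \<in># B"
    then have "cmod (z / (z - b)) \<le> cmod z / (d - cmod z)"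
      using assms by (intro norm_div_diff_le_outer) auto
    then show "- (cmod z / (d - cmod z)) \<le> Re (z / (z - b))"
      using abs_Re_le_cmod[of "z / (z - b)"] by linarith
  qed
  ultimately show ?thesis
    by simp
qed

lemma norm_sum_div_diff_le:
  fixes z :: complex
  assumes "\<forall>a\<in>#A. cmod a \<le> s" "\<forall>b\<in>#B. d \<le> cmod b" "s < cmod z" "cmod z < d"
  shows "cmod (\<Sum>a\<in>#A + B. z / (z - a))
           \<le> real (size A) * (cmod z / (cmod z - s)) + real (size B) * (cmod z / (d - cmod z))"
proof -
  have "cmod (\<Sum>a\<in>#A + B. z / (z - a))
      \<le> cmod (\<Sum>a\<in>#A. z / (z - a)) + cmod (\<Sum>b\<in>#B. z / (z - b))"
    by (simp add: norm_triangle_ineq)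
  also have "\<dots> \<le> real (size A) * (cmod z / (cmod z - s)) + real (size B) * (cmod z / (d - cmod z))"
    using assms by (intro add_mono norm_sum_mset_le norm_div_diff_le_inner norm_div_diff_le_outer) auto
  finally show ?thesis .
qed

lemma poly_pderiv_prod_mset_linear:
  fixes z :: "'a::field"
  assumes "z \<notin># A"
  shows "poly (pderiv (\<Prod>a\<in>#A. [:-a, 1:])) z
           = poly (\<Prod>a\<in>#A. [:-a, 1:]) z * (\<Sum>a\<in>#A. 1 / (z - a))"
  using assms
proof (induction A)
  case (add x A)
  let ?P = "\<Prod>a\<in>#A. [:-a, 1:]"
  have "z - x \<noteq> 0" "z \<notin># A"
    using add.prems by auto
  have "poly (pderiv ([:-x, 1:] * ?P)) z = poly ?P z + (z - x) * poly (pderiv ?P) z"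
    by (simp only: pderiv_mult) (simp add: pderiv_pCons algebra_simps)
  also have "\<dots> = (z - x) * poly ?P z * (1 / (z - x) + (\<Sum>a\<in>#A. 1 / (z - a)))"
    using add.IH \<open>z \<notin># A\<close> \<open>z - x \<noteq> 0\<close> by (simp add: field_simps)
  finally show ?case
    by (simp add: algebra_simps)
qed simp

lemma poly_pderiv_div_eq_sum_proots:
  fixes p :: "complex poly"
  assumes "poly p z \<noteq> 0"
  shows "poly (pderiv p) z / poly p z = (\<Sum>a\<in>#proots p. 1 / (z - a))"
proof -
  have p: "p = smult (lead_coeff p) (\<Prod>a\<in>#proots p. [:-a, 1:])"
    by (rule complex_poly_decompose_multiset[symmetric])
  have "z \<notin># proots p"
    using assms by (cases "p = 0") auto
  then have "poly (pderiv p) z = poly p z * (\<Sum>a\<in>#proots p. 1 / (z - a))"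
    by (subst (1 2) p) (simp add: pderiv_smult poly_pderiv_prod_mset_linear)
  with assms show ?thesis
    by simp
qed

lemma zorder_poly:
  fixes p :: "complex poly"
  assumes "p \<noteq> 0"
  shows "zorder (poly p) z = int (order z p)"
proof -
  obtain q where q: "p = [:-z, 1:] ^ order z p * q" "\<not> [:-z, 1:] dvd q"
    using order_decomp[OF assms] by blast
  then have "poly q z \<noteq> 0"
    by (simp add: poly_eq_0_iff_dvd)
  show ?thesis
  proof (rule zorder_eqI[where S = UNIV and g = "poly q"])
    show "poly p w = poly q w * (w - z) powi int (order z p)" for w
      by (subst q(1)) (simp add: power_int_of_nat algebra_simps)
  qed (use \<open>poly q z \<noteq> 0\<close> in \<open>auto intro: poly_holomorphic_on holomorphic_intros\<close>)
qed

lemma size_filter_proots: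
  fixes p :: "'a::idom poly"
  assumes "p \<noteq> 0"
  shows "size (filter_mset P (proots p)) = (\<Sum>z | poly p z = 0 \<and> P z. order z p)"
proof -
  have "set_mset (filter_mset P (proots p)) = {z. poly p z = 0 \<and> P z}"
    using assms by auto
  then show ?thesis
    using assms by (simp add: size_multiset_overloaded_eq)
qed

lemma sum_winding_number_circlepath_zorder_poly:
  fixes p :: "complex poly"
  assumes "p \<noteq> 0" "0 < \<rho>" "\<And>z. cmod z = \<rho> \<Longrightarrow> poly p z \<noteq> 0"
  shows "(\<Sum>z | poly p z = 0. winding_number (circlepath 0 \<rho>) z * of_int (zorder (poly p) z))
           = of_nat (size (filter_mset (\<lambda>z. cmod z < \<rho>) (proots p)))"
proof -
  have winding: "winding_number (circlepath 0 \<rho>) z = (if cmod z < \<rho> then 1 else 0)"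
    if "poly p z = 0" for z
  proof (cases "cmod z < \<rho>")
    case False
    with assms(3) that have "z \<notin> cball 0 \<rho>"
      by force
    then have "winding_number (circlepath 0 \<rho>) z = 0"
      using assms(2) by (intro winding_number_zero_outside[where s = "cball 0 \<rho>"]) auto
    then show ?thesis
      using False by simp
  qed (auto intro: winding_number_circlepath)
  have "(\<Sum>z | poly p z = 0. winding_number (circlepath 0 \<rho>) z * of_int (zorder (poly p) z))
      = (\<Sum>z | poly p z = 0. if cmod z < \<rho> then of_nat (order z p) else 0)"
    by (intro sum.cong) (auto simp: winding zorder_poly[OF assms(1)])
  also have "\<dots> = (\<Sum>z | poly p z = 0 \<and> cmod z < \<rho>. of_nat (order z p))"
    using poly_roots_finite[OF assms(1)] by (simp add: sum.inter_filter[symmetric] conj_commute)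
  also have "\<dots> = of_nat (size (filter_mset (\<lambda>z. cmod z < \<rho>) (proots p)))"
    by (simp add: size_filter_proots[OF assms(1)])
  finally show ?thesis .
qed

lemma Rouche_theorem_poly:
  fixes f g :: "complex poly"
  assumes "0 < \<rho>" "\<And>z. cmod z = \<rho> \<Longrightarrow> cmod (poly f z - poly g z) < cmod (poly g z)"
  shows "size (filter_mset (\<lambda>z. cmod z < \<rho>) (proots f))
           = size (filter_mset (\<lambda>z. cmod z < \<rho>) (proots g))"
proof -
  have circle: "poly f z \<noteq> 0" "poly g z \<noteq> 0" if "cmod z = \<rho>" for z
    using assms(2)[OF that] by auto
  have "cmod (of_real \<rho> :: complex) = \<rho>"
    using assms(1) by simp
  then have "f \<noteq> 0" "g \<noteq> 0"
    using circle by fastforce+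
  have "(\<Sum>z\<in>{z\<in>UNIV. poly g z + (poly f z - poly g z) = 0}.
          winding_number (circlepath 0 \<rho>) z * zorder (\<lambda>z. poly g z + (poly f z - poly g z)) z)
      = (\<Sum>z\<in>{z\<in>UNIV. poly g z = 0}. winding_number (circlepath 0 \<rho>) z * zorder (poly g) z)"
  proof (rule Rouche_theorem)
    show "finite {z \<in> UNIV. poly g z + (poly f z - poly g z) = 0}"
      using poly_roots_finite[OF \<open>f \<noteq> 0\<close>] by simp
    show "finite {z \<in> UNIV. poly g z = 0}"
      using poly_roots_finite[OF \<open>g \<noteq> 0\<close>] by simp
  qed (use assms in \<open>auto intro!: holomorphic_intros\<close>)
  then have "(of_nat (size (filter_mset (\<lambda>z. cmod z < \<rho>) (proots f))) :: complex)
      = of_nat (size (filter_mset (\<lambda>z. cmod z < \<rho>) (proots g)))"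
    by (simp add: sum_winding_number_circlepath_zorder_poly[symmetric] \<open>f \<noteq> 0\<close> \<open>g \<noteq> 0\<close> assms(1) circle)
  then show ?thesis
    by (simp only: of_nat_eq_iff)
qed

lemma norm_diff_of_real_less:
  assumes "(cmod w)\<^sup>2 < 2 * t * Re w" "0 < t"
  shows "cmod (w - of_real t) < t"
proof -
  have "(cmod (w - of_real t))\<^sup>2 = (cmod w)\<^sup>2 - 2 * t * Re w + t\<^sup>2"
    unfolding cmod_power2 by (simp add: power2_eq_square algebra_simps)
  then have "(cmod (w - of_real t))\<^sup>2 < t\<^sup>2"
    using assms(1) by simp
  then show ?thesis
    using assms(2) by (simp add: power_less_imp_less_base)
qed

lemma size_filter_mset_norm_le_plus_gt:
  "size (filter_mset (\<lambda>z. norm z \<le> s) M) + size (filter_mset (\<lambda>z. s < norm z) M) = size M"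
  by (subst (3) multiset_partition[where P = "\<lambda>z. norm z \<le> s"]) (simp add: not_le)

lemma filter_mset_norm_less_eq_le:
  assumes "s < \<rho>" "\<And>z. z \<in># M \<Longrightarrow> s < norm z \<Longrightarrow> \<rho> \<le> norm z"
  shows "filter_mset (\<lambda>z. norm z < \<rho>) M = filter_mset (\<lambda>z. norm z \<le> s) M"
  using assms by (intro filter_mset_cong) force+

locale poly_separated_roots =
  fixes p :: "complex poly" and n m :: nat and d :: real
  assumes one_le_n: "1 \<le> n"
    and degree_p: "degree p = n + m"
    and size_inner_proots: "size (filter_mset (\<lambda>z. cmod z \<le> 1) (proots p)) = n"
    and outer_proots_ge: "\<forall>z \<in># proots p. 1 < cmod z \<longrightarrow> d \<le> cmod z"
    and d_gt: "1 + 2 * real m / real n < d"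
begin

definition R :: real
  where "R = (d * real n - real m) / real (n + m)"

lemma p_nonzero: "p \<noteq> 0"
  using degree_p one_le_n by auto

lemma one_less_d: "1 < d"
proof -
  have "0 \<le> 2 * real m / real n"
    by simp
  with d_gt show ?thesis
    by linarith
qed

lemma one_less_R: "1 < R"
proof -
  have "real n + 2 * real m < d * real n"
    using d_gt one_le_n by (simp add: field_simps)
  then show ?thesis
    unfolding R_def using one_le_n by (simp add: field_simps)
qed

lemma R_le_d: "R \<le> d"
proof -
  have "0 \<le> d * real m"
    using one_less_d by simp
  then show ?thesis
    unfolding R_def using one_le_n by (simp add: field_simps)
qed

lemma logderiv_lower_bound_pos:
  assumes "1 < r" "r < R"
  shows "0 < real n * (r / (r + 1)) - real m * (r / (d - r))"
proof -
  have "real m * (r + 1) < real n * (d - r)"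
    using assms one_le_n unfolding R_def by (simp add: field_simps)
  moreover have "0 < d - r"
    using assms R_le_d by simp
  ultimately have "real m / (d - r) < real n / (r + 1)"
    using assms by (simp add: field_simps)
  then have "real m / (d - r) * r < real n / (r + 1) * r"
    using assms by (intro mult_strict_right_mono) auto
  then show ?thesis
    by simp
qed

lemma size_outer_proots: "size (filter_mset (\<lambda>z. 1 < cmod z) (proots p)) = m"
  using size_filter_mset_norm_le_plus_gt[of 1 "proots p"]
  by (simp add: size_inner_proots size_proots_complex degree_p)

lemma poly_nonzero_annulus:
  assumes "1 < cmod z" "cmod z < d"
  shows "poly p z \<noteq> 0"
  using assms outer_proots_ge p_nonzero by force

lemma logderiv_bounds:
  assumes "1 < cmod z" "cmod z < d"
  defines "w \<equiv> z * poly (pderiv p) z / poly p z"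
  shows "real n * (cmod z / (cmod z + 1)) - real m * (cmod z / (d - cmod z)) \<le> Re w"
    and "cmod w \<le> real n * (cmod z / (cmod z - 1)) + real m * (cmod z / (d - cmod z))"
proof -
  define A where "A = filter_mset (\<lambda>a. cmod a \<le> 1) (proots p)"
  define B where "B = filter_mset (\<lambda>a. 1 < cmod a) (proots p)"
  have "w = z * (poly (pderiv p) z / poly p z)"
    by (simp add: w_def)
  also have "\<dots> = (\<Sum>a\<in>#proots p. z / (z - a))"
    using poly_nonzero_annulus[OF assms(1,2)]
    by (simp add: poly_pderiv_div_eq_sum_proots sum_mset_distrib_left)
  also have "proots p = A + B"
    unfolding A_def B_def by (subst multiset_partition[of _ "\<lambda>a. cmod a \<le> 1"]) (simp add: not_le)
  finally have "w = (\<Sum>a\<in>#A + B. z / (z - a))" .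
  moreover have "\<forall>a\<in>#A. cmod a \<le> 1" "\<forall>b\<in>#B. d \<le> cmod b" "size A = n" "size B = m"
    using outer_proots_ge size_inner_proots size_outer_proots by (auto simp: A_def B_def)
  ultimately show "real n * (cmod z / (cmod z + 1)) - real m * (cmod z / (d - cmod z)) \<le> Re w"
    and "cmod w \<le> real n * (cmod z / (cmod z - 1)) + real m * (cmod z / (d - cmod z))"
    using Re_sum_div_diff_ge[of A 1 B d z] norm_sum_div_diff_le[of A 1 B d z] assms by auto
qed

lemma pderiv_nonzero_annulus:
  assumes "1 < cmod z" "cmod z < R"
  shows "poly (pderiv p) z \<noteq> 0"
proof
  assume "poly (pderiv p) z = 0"
  moreover have "cmod z < d"
    using assms R_le_d by simp
  ultimately show False
    using logderiv_bounds(1)[of z] logderiv_lower_bound_pos[OF assms] assms by simp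
qed

lemma pderiv_nonzero: "pderiv p \<noteq> 0"
  using one_le_n by (simp add: pderiv_eq_0_iff degree_p)

lemma outer_proots_pderiv_ge: "\<forall>z \<in># proots (pderiv p). 1 < cmod z \<longrightarrow> R \<le> cmod z"
proof (intro ballI impI)
  fix z assume "z \<in># proots (pderiv p)" "1 < cmod z"
  then have "poly (pderiv p) z = 0"
    using pderiv_nonzero by simp
  with \<open>1 < cmod z\<close> pderiv_nonzero_annulus show "R \<le> cmod z"
    by force
qed

lemma size_proots_x_times_pderiv_in_disc:
  assumes "1 < \<rho>" "\<rho> < R"
  shows "size (filter_mset (\<lambda>z. cmod z < \<rho>) (proots ([:0, 1:] * pderiv p))) = n"
proof -
  define \<delta> where "\<delta> = real n * (\<rho> / (\<rho> + 1)) - real m * (\<rho> / (d - \<rho>))"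
  define M where "M = real n * (\<rho> / (\<rho> - 1)) + real m * (\<rho> / (d - \<rho>))"
  define t where "t = M\<^sup>2 / \<delta>"
  have "\<rho> < d"
    using assms R_le_d by simp
  have "0 < \<delta>"
    unfolding \<delta>_def using logderiv_lower_bound_pos[OF assms] .
  moreover have "0 < M"
    unfolding M_def using assms one_le_n \<open>\<rho> < d\<close> by (intro add_pos_nonneg) auto
  ultimately have "0 < t"
    by (simp add: t_def)
  have dominated: "cmod (poly ([:0, 1:] * pderiv p) z - poly (smult (of_real t) p) z)
                     < cmod (poly (smult (of_real t) p) z)" if "cmod z = \<rho>" for z
  proof -
    define w where "w = z * poly (pderiv p) z / poly p z"
    have "poly p z \<noteq> 0" "\<delta> \<le> Re w" "cmod w \<le> M"
      using that assms \<open>\<rho> < d\<close> poly_nonzero_annulus logderiv_bounds[of z]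
      by (auto simp: w_def \<delta>_def M_def)
    have "(cmod w)\<^sup>2 \<le> M\<^sup>2"
      using \<open>cmod w \<le> M\<close> by (simp add: power_mono)
    also have "\<dots> < 2 * t * \<delta>"
      using \<open>0 < M\<close> \<open>0 < \<delta>\<close> by (simp add: t_def)
    also have "\<dots> \<le> 2 * t * Re w"
      using \<open>\<delta> \<le> Re w\<close> \<open>0 < t\<close> by simp
    finally have "cmod (w - of_real t) < t"
      using \<open>0 < t\<close> by (rule norm_diff_of_real_less)
    then have "cmod (poly p z) * cmod (w - of_real t) < cmod (poly p z) * t"
      using \<open>poly p z \<noteq> 0\<close> by simp
    moreover have "poly ([:0, 1:] * pderiv p) z - poly (smult (of_real t) p) z
        = poly p z * (w - of_real t)"
      using \<open>poly p z \<noteq> 0\<close> by (simp add: w_def algebra_simps)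
    ultimately show ?thesis
      using \<open>0 < t\<close> by (simp add: norm_mult mult.commute)
  qed
  have "size (filter_mset (\<lambda>z. cmod z < \<rho>) (proots ([:0, 1:] * pderiv p)))
      = size (filter_mset (\<lambda>z. cmod z < \<rho>) (proots (smult (of_real t) p)))"
    using assms dominated by (intro Rouche_theorem_poly) auto
  also have "\<dots> = size (filter_mset (\<lambda>z. cmod z \<le> 1) (proots p))"
    using \<open>0 < t\<close> \<open>1 < \<rho>\<close> \<open>\<rho> < d\<close> outer_proots_ge
    by (subst filter_mset_norm_less_eq_le) force+
  finally show ?thesis
    by (simp add: size_inner_proots)
qed

lemma size_inner_proots_pderiv: "size (filter_mset (\<lambda>z. cmod z \<le> 1) (proots (pderiv p))) = n - 1"
proof -
  define \<rho> where "\<rho> = (1 + R) / 2"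
  have \<rho>: "1 < \<rho>" "\<rho> < R"
    using one_less_R by (auto simp: \<rho>_def)
  have "proots ([:0, 1:] * pderiv p) = add_mset 0 (proots (pderiv p))"
    using proots_mult[of "[:0, 1:]" "pderiv p"] proots_linear_factor[of 0] pderiv_nonzero by simp
  then have "Suc (size (filter_mset (\<lambda>z. cmod z < \<rho>) (proots (pderiv p)))) = n"
    using size_proots_x_times_pderiv_in_disc[OF \<rho>] \<rho> by simp
  moreover have "filter_mset (\<lambda>z. cmod z < \<rho>) (proots (pderiv p))
      = filter_mset (\<lambda>z. cmod z \<le> 1) (proots (pderiv p))"
    using \<rho> outer_proots_pderiv_ge by (intro filter_mset_norm_less_eq_le) force+
  ultimately show ?thesis
    by simp
qed

lemma size_outer_proots_pderiv: "size (filter_mset (\<lambda>z. 1 < cmod z) (proots (pderiv p))) = m"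
  using size_filter_mset_norm_le_plus_gt[of 1 "proots (pderiv p)"] size_inner_proots_pderiv one_le_n
  by (simp add: size_proots_complex degree_pderiv degree_p)

end

theorem theorem1:
  fixes p :: "complex poly" and n m :: nat and d :: real
  assumes "n \<ge> 1" and "m \<ge> 1"
    and "degree p = n + m"
    and "size (filter_mset (\<lambda>z. cmod z \<le> 1) (proots p)) = n"
    and "\<forall>z \<in># proots p. cmod z > 1 \<longrightarrow> d \<le> cmod z"
    and "d > 1 + 2 * real m / real n"
  shows "size (filter_mset (\<lambda>z. cmod z \<le> 1) (proots (pderiv p))) = n - 1
    \<and> size (filter_mset (\<lambda>z. cmod z > 1) (proots (pderiv p))) = m
    \<and> (\<forall>z \<in># proots (pderiv p). cmod z > 1 \<longrightarrow>
          (d * real n - real m) / real (n + m) \<le> cmod z)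
    \<and> (d * real n - real m) / real (n + m) > 1"
proof -
  interpret poly_separated_roots p n m d
    using assms by unfold_locales auto
  show ?thesis
    using size_inner_proots_pderiv size_outer_proots_pderiv outer_proots_pderiv_ge one_less_R
    unfolding R_def by blast
qed

end
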